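(* Let $X,Y\ge0$ be random variables with probability density functions $f_X\ge0$ and $f_Y>0$ on $(0,\infty)$, and let $L_X(x)=\int_0^\infty f_X(t)e^{-tx}\,dt$, $L_Y(x)=\int_0^\infty f_Y(t)e^{-tx}\,dt$ $(x>0)$. If one of the conditions (i) $t\mapsto f_X(t)/f_Y(t)$ is increasing (resp. decreasing) on $(0,\infty)$; (ii) there exists $t^*\in(0,\infty)$ such that $t\mapsto f_X(t)/f_Y(t)$ is increasing (resp. decreasing) on $(0,t^* )$ and decreasing (resp. increasing) on $(t^*,\infty)$, and $H_{L_X,L_Y}(0^+)\ge0$ (resp. $\le0$); holds, then $Y\le_{Lt-r}X$ (resp. $X\le_{Lt-r}Y$).
   Context: For a random variable $Z\ge0$ with distribution function $F_Z$, $L_Z(x)=\int_0^\infty e^{-tx}\,dF_Z(t)$, $x>0$. For random variables $X,Y\ge0$, $X\le_{Lt-r}Y$ means that $x\mapsto L_Y(x)/L_X(x)$ is decreasing on $(0,\infty)$. $H_{F,G}=\frac{F'}{G'}G-F$ and $H_{F,G}(0^+)=\lim_{x\to0^+}H_{F,G}(x)$. *)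

theory Defs
  imports "HOL-Analysis.Analysis"
begin

definition is_density :: "(real \<Rightarrow> real) \<Rightarrow> bool" where
  "is_density f \<longleftrightarrow> (\<forall>t>0. f t \<ge> 0) \<and> set_integrable lborel {0<..} f
     \<and> (LBINT t:{0<..}. f t) = 1"

definition lap :: "(real \<Rightarrow> real) \<Rightarrow> real \<Rightarrow> real" where
  "lap f x = (LBINT t:{0<..}. f t * exp (- t * x))"

definition H_fun :: "(real \<Rightarrow> real) \<Rightarrow> (real \<Rightarrow> real) \<Rightarrow> real \<Rightarrow> real" where
  "H_fun F G x = deriv F x / deriv G x * G x - F x"

text \<open>Laplace-transform-ratio order for variables with densities fX, fY:
  X <=_{Lt-r} Y iff x |-> L_Y(x)/L_X(x) is decreasing (nonincreasing) on (0,oo).\<close>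
definition lt_r_le :: "(real \<Rightarrow> real) \<Rightarrow> (real \<Rightarrow> real) \<Rightarrow> bool" where
  "lt_r_le fX fY \<longleftrightarrow> antimono_on {0<..} (\<lambda>x. lap fY x / lap fX x)"

end

theory Submission
  imports Defs
begin

(*
  Write L_p for the Laplace transform of p on (0,oo) and M_p = L_{t p}, so that L_p' = -M_p and
  H_{L_X,L_Y} = (M_X/M_Y) L_Y - L_X.  The quotient L_X/L_Y has derivative -M_Y H/L_Y^2, so everything
  reduces to showing H >= 0; the decreasing cases follow by replacing f_X with -f_X.

  If f_X/f_Y increases, let c = L_X(x)/L_Y(x).  Then k = f_X - c f_Y changes sign once, from - to +,
  at some a, and L_k(x) = 0, so M_k(x) = L_{(t - a) k}(x) >= 0; up to a positive factor this is H(x).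

  If f_X/f_Y is unimodal, M_X/M_Y has no strict valley: at x1 < x2 < x3 with level c = (M_X/M_Y)(x2),
  t (f_X - c f_Y) has the sign pattern -,+,- while a suitable alpha e^(-t x1) - e^(-t x2) + beta e^(-t x3)
  has the pattern +,-,+.  So the integral of their product is <= 0, but it equals
  alpha N(x1) - N(x2) + beta N(x3) > 0 for N = M_X - c M_Y, which vanishes at x2 and is positive at x1, x3.
  As H' = L_Y (M_X/M_Y)', H has no strict valley either.  H is asymptotically nonnegative at 0+ by
  hypothesis and at infinity, where the part of f_X beyond a small delta is exponentially negligible and
  the part below delta can be given an increasing ratio.  Hence H >= 0 everywhere.
*)

definition laplace_integrable :: "(real \<Rightarrow> real) \<Rightarrow> bool" where
  "laplace_integrable p \<longleftrightarrow> (\<forall>x>0. set_integrable lborel {0<..} (\<lambda>t. p t * exp (- t * x)))"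

lemma set_integrable_mult_bounded:
  fixes f g :: "'a \<Rightarrow> real"
  assumes f: "set_integrable M A f" and g: "g \<in> borel_measurable M"
    and bound: "\<And>x. x \<in> A \<Longrightarrow> \<bar>g x\<bar> \<le> C"
  shows "set_integrable M A (\<lambda>x. f x * g x)"
proof (rule set_integrable_bound[of M A "\<lambda>x. C * f x"])
  show "set_integrable M A (\<lambda>x. C * f x)" using f by simp
  have "(\<lambda>x. indicator A x *\<^sub>R f x) \<in> borel_measurable M"
    using f unfolding set_integrable_def by (rule borel_measurable_integrable)
  then have "(\<lambda>x. (indicator A x *\<^sub>R f x) * g x) \<in> borel_measurable M"
    using g by (rule borel_measurable_times)
  then show "set_borel_measurable M A (\<lambda>x. f x * g x)"
    unfolding set_borel_measurable_def by (simp add: mult.assoc)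
  show "AE x in M. x \<in> A \<longrightarrow> norm (f x * g x) \<le> norm (C * f x)"
  proof (intro AE_I2 impI)
    fix x assume "x \<in> A"
    then have "\<bar>f x\<bar> * \<bar>g x\<bar> \<le> \<bar>f x\<bar> * \<bar>C\<bar>"
      using bound by (intro mult_left_mono) force+
    then show "norm (f x * g x) \<le> norm (C * f x)" by (simp add: abs_mult mult.commute)
  qed
qed

lemma laplace_integrableD:
  "laplace_integrable p \<Longrightarrow> x > 0 \<Longrightarrow> set_integrable lborel {0<..} (\<lambda>t. p t * exp (- t * x))"
  unfolding laplace_integrable_def by blast

lemma laplace_integrable_if_set_integrable:
  assumes "set_integrable lborel {0<..} p"
  shows "laplace_integrable p"
  unfolding laplace_integrable_def
proof (intro allI impI)
  fix x :: real assume "x > 0"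
  then show "set_integrable lborel {0<..} (\<lambda>t. p t * exp (- t * x))"
    by (intro set_integrable_mult_bounded[OF assms, where C = 1]) auto
qed

lemma laplace_integrable_mult_id:
  assumes "laplace_integrable p"
  shows "laplace_integrable (\<lambda>t. t * p t)"
  unfolding laplace_integrable_def
proof (intro allI impI)
  fix x :: real assume x: "x > 0"
  have "t * exp (- t * (x/2)) \<le> 2 / x" if "t > 0" for t
  proof -
    have "t * (x/2) \<le> exp (t * (x/2))" using exp_ge_add_one_self[of "t * (x/2)"] by linarith
    then show ?thesis using x by (simp add: exp_minus field_simps)
  qed
  then have "set_integrable lborel {0<..} (\<lambda>t. p t * exp (- t * (x/2)) * (t * exp (- t * (x/2))))"
    using x by (intro set_integrable_mult_bounded[where C = "2/x"] laplace_integrableD[OF assms]) auto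
  moreover have "(\<lambda>t. p t * exp (- t * (x/2)) * (t * exp (- t * (x/2)))) = (\<lambda>t. t * p t * exp (- t * x))"
    by (auto simp: mult_ac simp flip: exp_add)
  ultimately show "set_integrable lborel {0<..} (\<lambda>t. t * p t * exp (- t * x))" by simp
qed

lemma laplace_integrable_mult_indicator:
  assumes "laplace_integrable p" and "A \<in> sets borel"
  shows "laplace_integrable (\<lambda>t. indicator A t * p t)"
  unfolding laplace_integrable_def
proof (intro allI impI)
  fix x :: real assume "x > 0"
  have "set_integrable lborel {0<..} (\<lambda>t. p t * exp (- t * x) * indicator A t)"
    using assms \<open>x > 0\<close> by (intro set_integrable_mult_bounded[where C = 1] laplace_integrableD) auto
  then show "set_integrable lborel {0<..} (\<lambda>t. indicator A t * p t * exp (- t * x))"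
    by (simp add: mult_ac)
qed

lemma laplace_integrable_abs:
  assumes "laplace_integrable p"
  shows "laplace_integrable (\<lambda>t. \<bar>p t\<bar>)"
  unfolding laplace_integrable_def
proof (intro allI impI)
  fix x :: real assume "x > 0"
  then have "set_integrable lborel {0<..} (\<lambda>t. \<bar>p t * exp (- t * x)\<bar>)"
    by (intro set_integrable_abs laplace_integrableD[OF assms])
  then show "set_integrable lborel {0<..} (\<lambda>t. \<bar>p t\<bar> * exp (- t * x))"
    by (simp add: abs_mult)
qed

lemma laplace_integrable_add:
  "laplace_integrable p \<Longrightarrow> laplace_integrable q \<Longrightarrow> laplace_integrable (\<lambda>t. p t + q t)"
  unfolding laplace_integrable_def by (simp add: distrib_right)

lemma laplace_integrable_diff:
  "laplace_integrable p \<Longrightarrow> laplace_integrable q \<Longrightarrow> laplace_integrable (\<lambda>t. p t - q t)"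
  unfolding laplace_integrable_def by (simp add: left_diff_distrib)

lemma laplace_integrable_cmult: "laplace_integrable p \<Longrightarrow> laplace_integrable (\<lambda>t. c * p t)"
  unfolding laplace_integrable_def by (simp add: mult.assoc)

lemma laplace_integrable_minus: "laplace_integrable p \<Longrightarrow> laplace_integrable (\<lambda>t. - p t)"
  using laplace_integrable_cmult[of p "-1"] by simp

lemma lap_add:
  "laplace_integrable p \<Longrightarrow> laplace_integrable q \<Longrightarrow> x > 0 \<Longrightarrow>
    lap (\<lambda>t. p t + q t) x = lap p x + lap q x"
  unfolding lap_def using laplace_integrableD[of p x] laplace_integrableD[of q x]
  by (simp add: distrib_right)

lemma lap_diff:
  "laplace_integrable p \<Longrightarrow> laplace_integrable q \<Longrightarrow> x > 0 \<Longrightarrow>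
    lap (\<lambda>t. p t - q t) x = lap p x - lap q x"
  unfolding lap_def using laplace_integrableD[of p x] laplace_integrableD[of q x]
  by (simp add: left_diff_distrib)

lemma lap_cmult: "lap (\<lambda>t. c * p t) x = c * lap p x"
  unfolding lap_def by (simp add: mult.assoc)

lemma lap_minus: "lap (\<lambda>t. - p t) x = - lap p x"
  using lap_cmult[of "-1" p x] by simp

lemma abs_exp_sub_one_sub_id_le:
  fixes y :: real
  shows "\<bar>exp y - 1 - y\<bar> \<le> exp \<bar>y\<bar> / 2 * y\<^sup>2"
proof -
  obtain s where s: "\<bar>s\<bar> \<le> \<bar>y\<bar>" "exp y = (\<Sum>m<2. y ^ m / fact m) + exp s / fact 2 * y ^ 2"
    using Maclaurin_exp_le[of y 2] by blast
  have "(\<Sum>m<2. y ^ m / fact m) = 1 + y" by (simp add: numeral_2_eq_2)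
  with s(2) have "\<bar>exp y - 1 - y\<bar> = exp s / 2 * y\<^sup>2" by simp
  also have "\<dots> \<le> exp \<bar>y\<bar> / 2 * y\<^sup>2"
    using s(1) by (intro mult_right_mono divide_right_mono) auto
  finally show ?thesis .
qed

lemma exp_neg_mult_second_order_bound:
  fixes t x h :: real
  assumes "t \<ge> 0" "\<bar>h\<bar> \<le> x/2"
  shows "\<bar>exp (- t * (x + h)) - exp (- t * x) + h * (t * exp (- t * x))\<bar>
    \<le> h\<^sup>2 / 2 * (t\<^sup>2 * exp (- t * (x/2)))"
proof -
  have "t * \<bar>h\<bar> \<le> t * (x/2)" using assms by (intro mult_left_mono) auto
  then have decay: "exp (- t * x) * exp (t * \<bar>h\<bar>) \<le> exp (- t * (x/2))"
    by (simp flip: exp_add)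
  have "exp (- t * (x + h)) - exp (- t * x) + h * (t * exp (- t * x))
      = exp (- t * x) * (exp (- t * h) - 1 - (- t * h))"
    by (simp add: algebra_simps flip: exp_add)
  then have "\<bar>exp (- t * (x + h)) - exp (- t * x) + h * (t * exp (- t * x))\<bar>
      = exp (- t * x) * \<bar>exp (- t * h) - 1 - (- t * h)\<bar>"
    by (simp add: abs_mult)
  also have "\<dots> \<le> exp (- t * x) * (exp \<bar>- t * h\<bar> / 2 * (- t * h)\<^sup>2)"
    by (intro mult_left_mono abs_exp_sub_one_sub_id_le) auto
  also have "\<dots> = exp (- t * x) * exp (t * \<bar>h\<bar>) * (h\<^sup>2 / 2 * t\<^sup>2)"
    using assms(1) by (simp add: abs_mult power_mult_distrib)
  also have "\<dots> \<le> exp (- t * (x/2)) * (h\<^sup>2 / 2 * t\<^sup>2)"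
    by (intro mult_right_mono decay) auto
  finally show ?thesis by (simp add: mult_ac)
qed

lemma lap_second_order_bound:
  assumes p: "laplace_integrable p" and x: "x > 0" and h: "\<bar>h\<bar> < x/2"
  shows "\<bar>lap p (x + h) - lap p x + h * lap (\<lambda>t. t * p t) x\<bar>
    \<le> h\<^sup>2 / 2 * lap (\<lambda>t. \<bar>t * (t * p t)\<bar>) (x/2)"
proof -
  define D where "D t = p t * exp (- t * (x + h)) - p t * exp (- t * x) + h * (t * p t * exp (- t * x))" for t
  have I: "set_integrable lborel {0<..} (\<lambda>t. p t * exp (- t * (x + h)))"
    "set_integrable lborel {0<..} (\<lambda>t. p t * exp (- t * x))"
    "set_integrable lborel {0<..} (\<lambda>t. h * (t * p t * exp (- t * x)))"
    using laplace_integrableD[OF p, of "x + h"] laplace_integrableD[OF p x]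
      laplace_integrableD[OF laplace_integrable_mult_id[OF p] x] h by auto
  then have ID: "set_integrable lborel {0<..} D"
    unfolding D_def by (intro set_integral_add set_integral_diff) auto
  have "lap p (x + h) - lap p x + h * lap (\<lambda>t. t * p t) x = (LBINT t:{0<..}. D t)"
    unfolding D_def lap_def using I by (simp add: set_integral_add set_integral_diff)
  also have "\<bar>\<dots>\<bar> \<le> (LBINT t:{0<..}. \<bar>D t\<bar>)"
    using set_integral_norm_bound[OF ID] by simp
  also have "\<dots> \<le> (LBINT t:{0<..}. h\<^sup>2 / 2 * (\<bar>t * (t * p t)\<bar> * exp (- t * (x/2))))"
  proof (rule set_integral_mono)
    show "set_integrable lborel {0<..} (\<lambda>t. \<bar>D t\<bar>)" using set_integrable_abs[OF ID] .
    show "set_integrable lborel {0<..} (\<lambda>t. h\<^sup>2 / 2 * (\<bar>t * (t * p t)\<bar> * exp (- t * (x/2))))"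
      using laplace_integrableD[OF laplace_integrable_abs[OF laplace_integrable_mult_id[OF
          laplace_integrable_mult_id[OF p]]], of "x/2"] x by simp
    fix t :: real assume "t \<in> {0<..}"
    have "D t = p t * (exp (- t * (x + h)) - exp (- t * x) + h * (t * exp (- t * x)))"
      unfolding D_def by (simp add: algebra_simps)
    then have "\<bar>D t\<bar> = \<bar>p t\<bar> * \<bar>exp (- t * (x + h)) - exp (- t * x) + h * (t * exp (- t * x))\<bar>"
      by (simp add: abs_mult)
    also have "\<dots> \<le> \<bar>p t\<bar> * (h\<^sup>2 / 2 * (t\<^sup>2 * exp (- t * (x/2))))"
      using \<open>t \<in> {0<..}\<close> h by (intro mult_left_mono exp_neg_mult_second_order_bound) auto
    finally show "\<bar>D t\<bar> \<le> h\<^sup>2 / 2 * (\<bar>t * (t * p t)\<bar> * exp (- t * (x/2)))"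
      by (simp add: abs_mult power2_eq_square mult_ac)
  qed
  also have "\<dots> = h\<^sup>2 / 2 * lap (\<lambda>t. \<bar>t * (t * p t)\<bar>) (x/2)" unfolding lap_def by simp
  finally show ?thesis .
qed

lemma lap_has_real_derivative:
  assumes p: "laplace_integrable p" and x: "x > 0"
  shows "(lap p has_real_derivative - lap (\<lambda>t. t * p t) x) (at x)"
proof -
  define C where "C = lap (\<lambda>t. \<bar>t * (t * p t)\<bar>) (x/2)"
  have "((\<lambda>h. (lap p (x + h) - lap p x) / h - - lap (\<lambda>t. t * p t) x) \<longlongrightarrow> 0) (at 0)"
  proof (rule Lim_null_comparison)
    have "norm ((lap p (x + h) - lap p x) / h - - lap (\<lambda>t. t * p t) x) \<le> \<bar>h\<bar> * C / 2"
      if "h \<noteq> 0" "\<bar>h\<bar> < x/2" for h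
    proof -
      have "(lap p (x + h) - lap p x) / h - - lap (\<lambda>t. t * p t) x
          = (lap p (x + h) - lap p x + h * lap (\<lambda>t. t * p t) x) / h"
        using that by (simp add: field_simps)
      with lap_second_order_bound[OF p x that(2)] that(1) show ?thesis
        unfolding C_def by (simp add: abs_divide divide_le_eq power2_eq_square mult_ac)
    qed
    then show "\<forall>\<^sub>F h in at 0. norm ((lap p (x + h) - lap p x) / h - - lap (\<lambda>t. t * p t) x) \<le> \<bar>h\<bar> * C / 2"
      unfolding eventually_at using x by (intro exI[of _ "x/2"]) (auto simp: dist_norm)
    show "((\<lambda>h. \<bar>h\<bar> * C / 2) \<longlongrightarrow> 0) (at 0)"
      by (auto intro!: tendsto_eq_intros)
  qed
  then show ?thesis
    unfolding DERIV_def by (subst Lim_null) assumption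
qed

lemma set_integral_nonneg_real:
  fixes f :: "'a \<Rightarrow> real"
  assumes "\<And>x. x \<in> A \<Longrightarrow> 0 \<le> f x"
  shows "0 \<le> (LINT x:A|M. f x)"
  unfolding set_lebesgue_integral_def
  using assms by (intro integral_nonneg_AE AE_I2) (auto simp: indicator_def)

lemma lap_nonneg: "(\<And>t. t > 0 \<Longrightarrow> 0 \<le> p t) \<Longrightarrow> 0 \<le> lap p x"
  unfolding lap_def by (intro set_integral_nonneg_real) auto

lemma lap_pos_if_not_AE_zero:
  assumes p: "laplace_integrable p" and nonneg: "\<And>t. t > 0 \<Longrightarrow> 0 \<le> p t"
    and nonzero: "\<not> (AE t\<in>{0<..} in lborel. p t = 0)" and x: "x > 0"
  shows "lap p x > 0"
proof (rule ccontr)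
  assume "\<not> lap p x > 0"
  with lap_nonneg[OF nonneg] have "lap p x = 0" by (simp add: order_less_le)
  then have "AE t in lborel. indicator {0<..} t *\<^sub>R (p t * exp (- t * x)) = 0"
    using laplace_integrableD[OF p x] nonneg unfolding lap_def set_lebesgue_integral_def set_integrable_def
    by (subst integral_nonneg_eq_0_iff_AE[symmetric]) (auto simp: indicator_def)
  then have "AE t\<in>{0<..} in lborel. p t = 0"
    by (rule eventually_mono) (simp add: indicator_def split: if_splits)
  with nonzero show False ..
qed

lemma lap_pos_if_pos_near_zero:
  assumes p: "laplace_integrable p" and nonneg: "\<And>t. t > 0 \<Longrightarrow> 0 \<le> p t"
    and pos: "\<And>t. 0 < t \<Longrightarrow> t < b \<Longrightarrow> p t > 0" and "b > 0" and x: "x > 0"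
  shows "lap p x > 0"
proof (rule lap_pos_if_not_AE_zero[OF p nonneg _ x])
  show "\<not> (AE t\<in>{0<..} in lborel. p t = 0)"
  proof
    assume "AE t\<in>{0<..} in lborel. p t = 0"
    then have "AE t in lborel. t \<notin> {0<..<b}"
      by eventually_elim (use pos in force)
    then have "{0<..<b} \<in> null_sets lborel" by (subst AE_iff_null_sets) auto
    then have "emeasure lborel {0<..<b} = 0" by auto
    with \<open>b > 0\<close> show False by simp
  qed
qed

lemma lap_pos:
  assumes "laplace_integrable p" "\<And>t. t > 0 \<Longrightarrow> p t > 0" "x > 0"
  shows "lap p x > 0"
  using assms by (intro lap_pos_if_pos_near_zero[where b = 1]) (auto simp: less_imp_le)

lemma lap_pos_if_set_integral_nonzero:
  assumes p: "set_integrable lborel {0<..} p" and nonneg: "\<And>t. t > 0 \<Longrightarrow> 0 \<le> p t"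
    and nonzero: "(LBINT t:{0<..}. p t) \<noteq> 0" and x: "x > 0"
  shows "lap p x > 0"
proof (rule lap_pos_if_not_AE_zero[OF laplace_integrable_if_set_integrable[OF p] nonneg _ x])
  show "\<not> (AE t\<in>{0<..} in lborel. p t = 0)"
  proof
    assume "AE t\<in>{0<..} in lborel. p t = 0"
    then have "AE t in lborel. indicator {0<..} t *\<^sub>R p t = 0"
      by (rule eventually_mono) (simp add: indicator_def)
    then have "(LBINT t:{0<..}. p t) = 0"
      unfolding set_lebesgue_integral_def by (rule integral_eq_zero_AE)
    with nonzero show False ..
  qed
qed

lemma lap_antimono:
  assumes p: "laplace_integrable p" and nonneg: "\<And>t. t > 0 \<Longrightarrow> 0 \<le> p t"
    and "0 < x" "x \<le> y"
  shows "lap p y \<le> lap p x"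
  unfolding lap_def
proof (rule set_integral_mono)
  show "set_integrable lborel {0<..} (\<lambda>t. p t * exp (- t * y))"
    by (rule laplace_integrableD[OF p]) (use assms in simp)
  show "set_integrable lborel {0<..} (\<lambda>t. p t * exp (- t * x))"
    by (rule laplace_integrableD[OF p]) (use assms in simp)
  show "p t * exp (- t * y) \<le> p t * exp (- t * x)" if "t \<in> {0<..}" for t
    using that assms by (intro mult_left_mono) auto
qed

lemma lap_tail_bound:
  assumes p: "laplace_integrable p" and vanish: "\<And>t. 0 < t \<Longrightarrow> t < \<delta> \<Longrightarrow> p t = 0"
    and "0 < y" "y \<le> x"
  shows "\<bar>lap p x\<bar> \<le> exp (- \<delta> * (x - y)) * lap (\<lambda>t. \<bar>p t\<bar>) y"
proof -
  have I: "set_integrable lborel {0<..} (\<lambda>t. p t * exp (- t * x))"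
    by (rule laplace_integrableD[OF p]) (use assms in simp)
  have "\<bar>lap p x\<bar> \<le> (LBINT t:{0<..}. \<bar>p t * exp (- t * x)\<bar>)"
    unfolding lap_def using set_integral_norm_bound[OF I] by simp
  also have "\<dots> \<le> (LBINT t:{0<..}. exp (- \<delta> * (x - y)) * (\<bar>p t\<bar> * exp (- t * y)))"
  proof (rule set_integral_mono)
    show "set_integrable lborel {0<..} (\<lambda>t. \<bar>p t * exp (- t * x)\<bar>)"
      using set_integrable_abs[OF I] .
    show "set_integrable lborel {0<..} (\<lambda>t. exp (- \<delta> * (x - y)) * (\<bar>p t\<bar> * exp (- t * y)))"
      using laplace_integrableD[OF laplace_integrable_abs[OF p] \<open>0 < y\<close>] by simp
    fix t :: real assume t: "t \<in> {0<..}"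
    show "\<bar>p t * exp (- t * x)\<bar> \<le> exp (- \<delta> * (x - y)) * (\<bar>p t\<bar> * exp (- t * y))"
    proof (cases "t < \<delta>")
      case False
      then have "\<delta> * (x - y) \<le> t * (x - y)" using assms by (intro mult_right_mono) auto
      then have "exp (- t * x) \<le> exp (- \<delta> * (x - y)) * exp (- t * y)"
        by (simp add: algebra_simps flip: exp_add)
      then show ?thesis by (simp add: abs_mult mult_left_mono mult.left_commute)
    qed (use vanish t in simp)
  qed
  also have "\<dots> = exp (- \<delta> * (x - y)) * lap (\<lambda>t. \<bar>p t\<bar>) y"
    unfolding lap_def by simp
  finally show ?thesis .
qed

lemma lap_head_lower_bound:
  assumes p: "laplace_integrable p" and nonneg: "\<And>t. t > 0 \<Longrightarrow> 0 \<le> p t"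
    and "0 < y" "y \<le> x"
  shows "exp (- \<delta> * (x - y)) * lap (\<lambda>t. indicator {..<\<delta>} t * p t) y \<le> lap p x"
proof -
  have "exp (- \<delta> * (x - y)) * lap (\<lambda>t. indicator {..<\<delta>} t * p t) y
      = (LBINT t:{0<..}. exp (- \<delta> * (x - y)) * (indicator {..<\<delta>} t * p t * exp (- t * y)))"
    unfolding lap_def by simp
  also have "\<dots> \<le> lap p x"
    unfolding lap_def
  proof (rule set_integral_mono)
    show "set_integrable lborel {0<..}
        (\<lambda>t. exp (- \<delta> * (x - y)) * (indicator {..<\<delta>} t * p t * exp (- t * y)))"
      using laplace_integrableD[OF laplace_integrable_mult_indicator[OF p, of "{..<\<delta>}"] \<open>0 < y\<close>]
      by simp
    show "set_integrable lborel {0<..} (\<lambda>t. p t * exp (- t * x))"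
      by (rule laplace_integrableD[OF p]) (use assms in simp)
    fix t :: real assume t: "t \<in> {0<..}"
    show "exp (- \<delta> * (x - y)) * (indicator {..<\<delta>} t * p t * exp (- t * y)) \<le> p t * exp (- t * x)"
    proof (cases "t < \<delta>")
      case True
      then have "t * (x - y) \<le> \<delta> * (x - y)" using assms by (intro mult_right_mono) auto
      then have "exp (- \<delta> * (x - y)) * exp (- t * y) \<le> exp (- t * x)"
        by (simp add: algebra_simps flip: exp_add)
      then show ?thesis using True t nonneg[of t] by (simp add: mult_left_mono mult.left_commute)
    qed (use t nonneg in simp)
  qed
  finally show ?thesis .
qed

lemma lap_mult_id_nonneg_if_sign_change:
  assumes k: "laplace_integrable k" and x: "x > 0" and zero: "lap k x = 0"
    and below: "\<And>t. 0 < t \<Longrightarrow> t < a \<Longrightarrow> k t \<le> 0" and above: "\<And>t. 0 < t \<Longrightarrow> a < t \<Longrightarrow> k t \<ge> 0"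
  shows "lap (\<lambda>t. t * k t) x \<ge> 0"
proof -
  have "k t * (t - a) \<ge> 0" if "t > 0" for t
    using below[OF that] above[OF that]
    by (cases t a rule: linorder_cases) (auto simp: mult_nonpos_nonpos)
  then have "0 \<le> lap (\<lambda>t. k t * (t - a)) x" by (intro lap_nonneg)
  also have "lap (\<lambda>t. k t * (t - a)) x = lap (\<lambda>t. t * k t - a * k t) x"
    by (simp add: algebra_simps)
  also have "\<dots> = lap (\<lambda>t. t * k t) x"
    using lap_diff[OF laplace_integrable_mult_id[OF k] laplace_integrable_cmult[OF k] x] zero
    by (simp add: lap_cmult)
  finally show ?thesis .
qed

lemma lap_exp_combination:
  assumes k: "laplace_integrable k" and x: "0 < x1" "0 < x2" "0 < x3"
  shows "set_integrable lborel {0<..} (\<lambda>t. k t * (\<alpha> * exp (- t * x1) - exp (- t * x2) + \<beta> * exp (- t * x3)))"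
    and "(LBINT t:{0<..}. k t * (\<alpha> * exp (- t * x1) - exp (- t * x2) + \<beta> * exp (- t * x3)))
      = \<alpha> * lap k x1 - lap k x2 + \<beta> * lap k x3"
proof -
  have eq: "(\<lambda>t. k t * (\<alpha> * exp (- t * x1) - exp (- t * x2) + \<beta> * exp (- t * x3)))
    = (\<lambda>t. \<alpha> * (k t * exp (- t * x1)) - k t * exp (- t * x2) + \<beta> * (k t * exp (- t * x3)))"
    by (auto simp: algebra_simps)
  have I: "set_integrable lborel {0<..} (\<lambda>t. \<alpha> * (k t * exp (- t * x1)))"
    "set_integrable lborel {0<..} (\<lambda>t. k t * exp (- t * x2))"
    "set_integrable lborel {0<..} (\<lambda>t. \<beta> * (k t * exp (- t * x3)))"
    using laplace_integrableD[OF k, of x1] laplace_integrableD[OF k, of x2] laplace_integrableD[OF k, of x3] x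
    by auto
  show "set_integrable lborel {0<..} (\<lambda>t. k t * (\<alpha> * exp (- t * x1) - exp (- t * x2) + \<beta> * exp (- t * x3)))"
    unfolding eq using I by (intro set_integral_add set_integral_diff) auto
  show "(LBINT t:{0<..}. k t * (\<alpha> * exp (- t * x1) - exp (- t * x2) + \<beta> * exp (- t * x3)))
      = \<alpha> * lap k x1 - lap k x2 + \<beta> * lap k x3"
    unfolding eq lap_def using I by (simp add: set_integral_add set_integral_diff)
qed

lemma lap_exp_combination_nonpos:
  assumes k: "laplace_integrable k" and x: "0 < x1" "0 < x2" "0 < x3"
    and sign: "\<And>t. t > 0 \<Longrightarrow> t \<noteq> s \<Longrightarrow> k t * (\<alpha> * exp (- t * x1) - exp (- t * x2) + \<beta> * exp (- t * x3)) \<le> 0"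
  shows "\<alpha> * lap k x1 - lap k x2 + \<beta> * lap k x3 \<le> 0"
proof -
  have "AE t\<in>{0<..} in lborel. k t * (\<alpha> * exp (- t * x1) - exp (- t * x2) + \<beta> * exp (- t * x3)) \<le> 0"
    using AE_lborel_singleton[of s] by eventually_elim (use sign in auto)
  moreover have "set_integrable lborel {0<..} (\<lambda>_. 0::real)" by (simp add: set_integrable_def)
  ultimately have "(LBINT t:{0<..}. k t * (\<alpha> * exp (- t * x1) - exp (- t * x2) + \<beta> * exp (- t * x3))) \<le> 0"
    using set_integral_mono_AE[OF lap_exp_combination(1)[OF k x]] by fastforce
  then show ?thesis using lap_exp_combination(2)[OF k x] by simp
qed

lemma convex_on_sign_between_zeros:
  fixes e :: "real \<Rightarrow> real"
  assumes cv: "convex_on UNIV e" and ea: "e a = 0" and eb: "e b = 0" and ab: "a < b"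
  shows "a \<le> t \<Longrightarrow> t \<le> b \<Longrightarrow> e t \<le> 0"
    and "t \<le> a \<or> b \<le> t \<Longrightarrow> e t \<ge> 0"
proof -
  assume t: "a \<le> t" "t \<le> b"
  define l where "l = (t - a) / (b - a)"
  have l: "0 \<le> l" "l \<le> 1" using t ab unfolding l_def by (auto simp: field_simps)
  have "l * (b - a) = t - a" using ab unfolding l_def by simp
  then have "(1 - l) *\<^sub>R a + l *\<^sub>R b = t" by (simp add: algebra_simps)
  then show "e t \<le> 0" using convex_onD[OF cv l, of a b] ea eb by simp
next
  have left: "e t \<ge> 0" if t: "t < a" for t
  proof -
    define l where "l = (a - t) / (b - t)"
    have l: "0 \<le> l" "l < 1" using t ab unfolding l_def by (auto simp: field_simps)
    have "l * (b - t) = a - t" using ab t unfolding l_def by simp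
    then have "(1 - l) *\<^sub>R t + l *\<^sub>R b = a" by (simp add: algebra_simps)
    then have "0 \<le> (1 - l) * e t" using convex_onD[OF cv, of l t b] l ea eb by simp
    then show ?thesis using l by (simp add: zero_le_mult_iff)
  qed
  have right: "e t \<ge> 0" if t: "b < t" for t
  proof -
    define l where "l = (b - a) / (t - a)"
    have l: "0 < l" "l \<le> 1" using t ab unfolding l_def by (auto simp: field_simps)
    have "l * (t - a) = b - a" using ab t unfolding l_def by simp
    then have "(1 - l) *\<^sub>R a + l *\<^sub>R t = b" by (simp add: algebra_simps)
    then have "0 \<le> l * e t" using convex_onD[OF cv, of l a t] l ea eb by simp
    then show ?thesis using l by (simp add: zero_le_mult_iff)
  qed
  assume "t \<le> a \<or> b \<le> t"
  then show "e t \<ge> 0" using left right ea eb by (cases "t = a \<or> t = b") force+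
qed

lemma convex_on_exp_combination:
  fixes \<alpha> \<beta> u v c :: real
  assumes "\<alpha> \<ge> 0" "\<beta> \<ge> 0" "u \<ge> 0" "v \<ge> 0"
  shows "convex_on UNIV (\<lambda>t. \<alpha> * exp (t * u) + \<beta> * exp (- t * v) - c)"
proof (rule convex_on_realI[where f' = "\<lambda>t. \<alpha> * u * exp (t * u) - \<beta> * v * exp (- t * v)"])
  show "((\<lambda>t. \<alpha> * exp (t * u) + \<beta> * exp (- t * v) - c) has_real_derivative
      \<alpha> * u * exp (t * u) - \<beta> * v * exp (- t * v)) (at t)" for t
    by (auto intro!: derivative_eq_intros)
  fix t y :: real assume "t \<le> y"
  then have "exp (t * u) \<le> exp (y * u)" "exp (- y * v) \<le> exp (- t * v)"
    using assms by (auto intro: mult_right_mono)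
  then have "\<alpha> * u * exp (t * u) \<le> \<alpha> * u * exp (y * u)" "\<beta> * v * exp (- y * v) \<le> \<beta> * v * exp (- t * v)"
    using assms by (auto intro!: mult_left_mono)
  then show "\<alpha> * u * exp (t * u) - \<beta> * v * exp (- t * v) \<le> \<alpha> * u * exp (y * u) - \<beta> * v * exp (- y * v)"
    by simp
qed simp

lemma exp_combination_sign_change_once:
  fixes x2 x3 a :: real
  assumes x: "x2 < x3"
  obtains \<beta> :: real where "\<beta> > 0"
    "\<And>t. t \<le> a \<Longrightarrow> \<beta> * exp (- t * x3) - exp (- t * x2) \<ge> 0"
    "\<And>t. a \<le> t \<Longrightarrow> \<beta> * exp (- t * x3) - exp (- t * x2) \<le> 0"
proof (rule that[of "exp (a * (x3 - x2))"])
  have w: "exp (a * (x3 - x2)) * exp (- t * x3) - exp (- t * x2) = exp (- t * x2) * (exp ((a - t) * (x3 - x2)) - 1)"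
    for t by (simp add: algebra_simps flip: exp_add)
  show "exp (a * (x3 - x2)) * exp (- t * x3) - exp (- t * x2) \<ge> 0" if "t \<le> a" for t
    unfolding w using that x by simp
  show "exp (a * (x3 - x2)) * exp (- t * x3) - exp (- t * x2) \<le> 0" if "a \<le> t" for t
    unfolding w using that x by (simp add: mult_nonneg_nonpos mult_nonpos_nonneg)
qed simp

lemma exp_combination_sign_change:
  fixes x1 x2 x3 a b :: real
  assumes x: "x1 < x2" "x2 < x3" and ab: "a < b"
  obtains \<alpha> \<beta> :: real where "\<alpha> > 0" "\<beta> > 0"
    "\<And>t. t \<le> a \<or> b \<le> t \<Longrightarrow> \<alpha> * exp (- t * x1) - exp (- t * x2) + \<beta> * exp (- t * x3) \<ge> 0"
    "\<And>t. a \<le> t \<Longrightarrow> t \<le> b \<Longrightarrow> \<alpha> * exp (- t * x1) - exp (- t * x2) + \<beta> * exp (- t * x3) \<le> 0"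
proof -
  define u where "u = x2 - x1"
  define v where "v = x3 - x2"
  have u: "u > 0" and v: "v > 0" using x unfolding u_def v_def by auto
  define det where "det = exp (a * u - b * v) - exp (b * u - a * v)"
  have "(b - a) * (u + v) > 0" using ab u v by simp
  then have "a * u - b * v < b * u - a * v" by (simp add: algebra_simps)
  then have det: "det < 0" unfolding det_def by simp
  define \<alpha> where "\<alpha> = (exp (- b * v) - exp (- a * v)) / det"
  define \<beta> where "\<beta> = (exp (a * u) - exp (b * u)) / det"
  have "exp (- b * v) < exp (- a * v)" using ab v by simp
  then have \<alpha>: "\<alpha> > 0" unfolding \<alpha>_def using det by (simp add: divide_neg_neg)
  have "exp (a * u) < exp (b * u)" using ab u by simp
  then have \<beta>: "\<beta> > 0" unfolding \<beta>_def using det by (simp add: divide_neg_neg)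
  define e where "e t = \<alpha> * exp (t * u) + \<beta> * exp (- t * v) - 1" for t
  \<comment> \<open>\<open>\<alpha>\<close> and \<open>\<beta>\<close> solve \<open>e a = 0\<close>, \<open>e b = 0\<close> by Cramer's rule\<close>
  have cv: "convex_on UNIV e"
    unfolding e_def[abs_def] using \<alpha> \<beta> u v by (intro convex_on_exp_combination) auto
  have zero: "e z = 0" if "z = a \<or> z = b" for z
  proof -
    have "(exp (- b * v) - exp (- a * v)) * exp (z * u) + (exp (a * u) - exp (b * u)) * exp (- z * v) = det"
      using that unfolding det_def by (auto simp: algebra_simps simp flip: exp_add)
    then have "\<alpha> * exp (z * u) + \<beta> * exp (- z * v) = 1"
      unfolding \<alpha>_def \<beta>_def using det by (simp add: add_divide_distrib [symmetric] mult.commute)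
    then show ?thesis unfolding e_def by simp
  qed
  have w: "\<alpha> * exp (- t * x1) - exp (- t * x2) + \<beta> * exp (- t * x3) = exp (- t * x2) * e t" for t
    unfolding e_def u_def v_def by (simp add: algebra_simps flip: exp_add)
  show ?thesis
  proof (rule that[OF \<alpha> \<beta>])
    show "\<alpha> * exp (- t * x1) - exp (- t * x2) + \<beta> * exp (- t * x3) \<ge> 0" if "t \<le> a \<or> b \<le> t" for t
      unfolding w using convex_on_sign_between_zeros(2)[OF cv zero zero ab that] by simp
    show "\<alpha> * exp (- t * x1) - exp (- t * x2) + \<beta> * exp (- t * x3) \<le> 0" if "a \<le> t" "t \<le> b" for t
      unfolding w using convex_on_sign_between_zeros(1)[OF cv zero zero ab that]
      by (simp add: mult_nonneg_nonpos)
  qed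
qed

lemma mono_on_level_crossing:
  fixes r :: "real \<Rightarrow> real"
  assumes r: "mono_on I r" and I: "I \<subseteq> {l..}"
  shows "(\<forall>t\<in>I. r t < c) \<or> (\<exists>a\<ge>l. (\<forall>t\<in>I. t < a \<longrightarrow> r t \<le> c) \<and> (\<forall>t\<in>I. a < t \<longrightarrow> c \<le> r t))"
proof -
  define A where "A = {t\<in>I. r t < c}"
  have below: "r t < c" if "t \<in> I" "t' \<in> A" "t < t'" for t t'
    using mono_onD[OF r, of t t'] that by (auto simp: A_def)
  consider "A = {}" | "A \<noteq> {}" "bdd_above A" | "\<not> bdd_above A" by metis
  then show ?thesis
  proof cases
    case 1
    then show ?thesis using I by (auto simp: A_def intro!: exI[of _ l])
  next
    case 2
    obtain t0 where "t0 \<in> A" using 2 by blast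
    then have "l \<le> Sup A" using cSup_upper[OF _ 2(2), of t0] I by (auto simp: A_def)
    moreover have "r t \<le> c" if "t \<in> I" "t < Sup A" for t
      using less_cSup_iff[OF 2] below[OF that(1)] that(2) by (meson less_imp_le)
    moreover have "c \<le> r t" if "t \<in> I" "Sup A < t" for t
      using cSup_upper[OF _ 2(2), of t] that by (force simp: A_def)
    ultimately show ?thesis by blast
  next
    case 3
    then have "r t < c" if "t \<in> I" for t
      using below[OF that] by (meson bdd_above.I linorder_not_le)
    then show ?thesis by blast
  qed
qed

lemma unimodal_level_crossings:
  fixes r :: "real \<Rightarrow> real"
  assumes s: "0 \<le> s" and r1: "mono_on {0<..<s} r" and r2: "antimono_on {s<..} r"
  obtains (bounded) a b where "0 \<le> a" "a \<le> s" "s \<le> b" "\<And>t. 0 < t \<Longrightarrow> t < a \<Longrightarrow> r t \<le> c"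
      "\<And>t. a < t \<Longrightarrow> t < b \<Longrightarrow> t \<noteq> s \<Longrightarrow> c \<le> r t" "\<And>t. b < t \<Longrightarrow> r t \<le> c"
    | (unbounded) a where "0 \<le> a" "\<And>t. 0 < t \<Longrightarrow> t < a \<Longrightarrow> r t \<le> c"
      "\<And>t. a < t \<Longrightarrow> t \<noteq> s \<Longrightarrow> c \<le> r t"
proof -
  obtain a where a: "0 \<le> a" "a \<le> s" "\<And>t. 0 < t \<Longrightarrow> t < a \<Longrightarrow> r t \<le> c"
    "\<And>t. a < t \<Longrightarrow> t < s \<Longrightarrow> c \<le> r t"
  proof -
    have "{0<..<s} \<subseteq> {0..}" by auto
    from mono_on_level_crossing[OF r1 this, of c] show thesis
    proof (elim disjE exE conjE)
      assume "\<forall>t\<in>{0<..<s}. r t < c"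
      then show thesis using s by (intro that[of s]) (auto simp: less_imp_le)
    next
      fix a assume "0 \<le> a" "\<forall>t\<in>{0<..<s}. t < a \<longrightarrow> r t \<le> c" "\<forall>t\<in>{0<..<s}. a < t \<longrightarrow> c \<le> r t"
      then show thesis using s by (intro that[of "min a s"]) auto
    qed
  qed
  have "mono_on {s<..} (\<lambda>t. - r t)" using r2 by (auto simp: monotone_on_def)
  moreover have "{s<..} \<subseteq> {s..}" by auto
  ultimately show thesis
  proof (rule mono_on_level_crossing[THEN disjE])
    assume "\<forall>t\<in>{s<..}. - r t < - c"
    then have "c \<le> r t" if "s < t" for t using that by force
    then show thesis using a by (intro unbounded[of a]) (auto simp: neq_iff)
  next
    assume "\<exists>b\<ge>s. (\<forall>t\<in>{s<..}. t < b \<longrightarrow> - r t \<le> - c) \<and> (\<forall>t\<in>{s<..}. b < t \<longrightarrow> - c \<le> - r t)"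
    then obtain b where "s \<le> b" "\<And>t. s < t \<Longrightarrow> t < b \<Longrightarrow> c \<le> r t" "\<And>t. b < t \<Longrightarrow> r t \<le> c"
      by force
    then show thesis using a by (intro bounded[of a b]) (auto simp: neq_iff)
  qed
qed

lemma unimodal_exp_combination_opposite_sign:
  fixes r :: "real \<Rightarrow> real"
  assumes s: "0 \<le> s" and r1: "mono_on {0<..<s} r" and r2: "antimono_on {s<..} r"
    and x: "x1 < x2" "x2 < x3"
  obtains \<alpha> \<beta> :: real where "\<alpha> \<ge> 0" "\<beta> \<ge> 0" "\<alpha> > 0 \<or> \<beta> > 0"
    "\<And>t. t > 0 \<Longrightarrow> t \<noteq> s \<Longrightarrow>
      (r t - c) * (\<alpha> * exp (- t * x1) - exp (- t * x2) + \<beta> * exp (- t * x3)) \<le> 0"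
proof (cases rule: unimodal_level_crossings[OF s r1 r2, of c, case_names bounded unbounded])
  case (unbounded a)
  obtain \<beta> where \<beta>: "\<beta> > 0" "\<And>t. t \<le> a \<Longrightarrow> \<beta> * exp (- t * x3) - exp (- t * x2) \<ge> 0"
    "\<And>t. a \<le> t \<Longrightarrow> \<beta> * exp (- t * x3) - exp (- t * x2) \<le> 0"
    using exp_combination_sign_change_once[OF x(2)] by metis
  show ?thesis
  proof (rule that[of 0 \<beta>])
    fix t :: real assume t: "t > 0" "t \<noteq> s"
    show "(r t - c) * (0 * exp (- t * x1) - exp (- t * x2) + \<beta> * exp (- t * x3)) \<le> 0"
      using unbounded(2,3)[of t] \<beta>(2,3)[of t] t
      by (cases t a rule: linorder_cases) (auto simp: mult_le_0_iff)
  qed (use \<beta> in auto)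
next
  case (bounded a b)
  show ?thesis
  proof (cases "a < b")
    case True
    obtain \<alpha> \<beta> where \<alpha>\<beta>: "\<alpha> > 0" "\<beta> > 0"
      and outside: "\<And>t. t \<le> a \<or> b \<le> t \<Longrightarrow> \<alpha> * exp (- t * x1) - exp (- t * x2) + \<beta> * exp (- t * x3) \<ge> 0"
      and inside: "\<And>t. a \<le> t \<Longrightarrow> t \<le> b \<Longrightarrow> \<alpha> * exp (- t * x1) - exp (- t * x2) + \<beta> * exp (- t * x3) \<le> 0"
      using exp_combination_sign_change[OF x True] by blast
    show ?thesis
    proof (rule that[of \<alpha> \<beta>])
      fix t :: real assume t: "t > 0" "t \<noteq> s"
      have "t < a \<or> b < t \<or> (a < t \<and> t < b) \<or> t = a \<or> t = b" by linarith
      then show "(r t - c) * (\<alpha> * exp (- t * x1) - exp (- t * x2) + \<beta> * exp (- t * x3)) \<le> 0"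
        using bounded(4,5,6)[of t] outside[of t] inside[of t] t True by (auto simp: mult_le_0_iff)
    qed (use \<alpha>\<beta> in auto)
  next
    case False
    \<comment> \<open>then \<open>a = s = b\<close>, so \<open>r \<le> c\<close> off the mode\<close>
    show ?thesis
    proof (rule that[of 1 0])
      fix t :: real assume t: "t > 0" "t \<noteq> s"
      have "r t \<le> c" using t bounded False by (cases "t < s") auto
      moreover have "exp (- t * x2) \<le> exp (- t * x1)" using t x by simp
      ultimately show "(r t - c) * (1 * exp (- t * x1) - exp (- t * x2) + 0 * exp (- t * x3)) \<le> 0"
        by (simp add: mult_le_0_iff)
    qed auto
  qed
qed

lemma strict_valley_imp_derivative_signs:
  fixes g g' :: "real \<Rightarrow> real"
  assumes x: "x1 < x2" "x2 < x3" and valley: "g x2 < g x1" "g x2 < g x3"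
    and g: "\<And>x. x1 \<le> x \<Longrightarrow> x \<le> x3 \<Longrightarrow> (g has_real_derivative g' x) (at x)"
  obtains z1 z3 where "x1 < z1" "z1 < z3" "z3 < x3" "g' z1 < 0" "g' z3 > 0"
proof -
  obtain z1 where z1: "x1 < z1" "z1 < x2" "g x2 - g x1 = (x2 - x1) * g' z1"
    using MVT2[OF x(1), of g g'] g x by force
  obtain z3 where z3: "x2 < z3" "z3 < x3" "g x3 - g x2 = (x3 - x2) * g' z3"
    using MVT2[OF x(2), of g g'] g x by force
  have "(x2 - x1) * g' z1 < 0" using z1(3) valley(1) by simp
  then have "g' z1 < 0" using x(1) by (simp add: mult_less_0_iff)
  moreover have "(x3 - x2) * g' z3 > 0" using z3(3) valley(2) by simp
  then have "g' z3 > 0" using x(2) by (simp add: zero_less_mult_iff)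
  ultimately show ?thesis using z1 z3 by (intro that[of z1 z3]) auto
qed

lemma derivative_signs_imp_strict_valley:
  fixes f f' :: "real \<Rightarrow> real"
  assumes z: "z1 < z3" and signs: "f' z1 < 0" "f' z3 > 0"
    and f: "\<And>x. z1 \<le> x \<Longrightarrow> x \<le> z3 \<Longrightarrow> (f has_real_derivative f' x) (at x)"
  obtains u where "z1 < u" "u < z3" "f u < f z1" "f u < f z3"
proof -
  have cont: "continuous_on {z1..z3} f"
    using f by (intro continuous_at_imp_continuous_on ballI DERIV_isCont) auto
  obtain u where u: "u \<in> {z1..z3}" "\<And>y. y \<in> {z1..z3} \<Longrightarrow> f u \<le> f y"
    using continuous_attains_inf[OF compact_Icc _ cont] z by auto
  obtain d1 where d1: "d1 > 0" "\<And>h. h > 0 \<Longrightarrow> h < d1 \<Longrightarrow> f (z1 + h) < f z1"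
    using DERIV_neg_dec_right[OF f signs(1)] z by force
  obtain d3 where d3: "d3 > 0" "\<And>h. h > 0 \<Longrightarrow> h < d3 \<Longrightarrow> f (z3 - h) < f z3"
    using DERIV_pos_inc_left[OF f signs(2)] z by force
  define h1 where "h1 = min (d1/2) (z3 - z1)"
  have "f u \<le> f (z1 + h1)" using u(2) d1 z unfolding h1_def by auto
  also have "\<dots> < f z1" using d1 z unfolding h1_def by (intro d1(2)) auto
  finally have u1: "f u < f z1" .
  define h3 where "h3 = min (d3/2) (z3 - z1)"
  have "f u \<le> f (z3 - h3)" using u(2) d3 z unfolding h3_def by auto
  also have "\<dots> < f z3" using d3 z unfolding h3_def by (intro d3(2)) auto
  finally have u3: "f u < f z3" .
  have "z1 < u" "u < z3" using u(1) u1 u3 by (auto simp: less_eq_real_def)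
  with u1 u3 show ?thesis using that by blast
qed

abbreviation lap_moment_ratio :: "(real \<Rightarrow> real) \<Rightarrow> (real \<Rightarrow> real) \<Rightarrow> real \<Rightarrow> real" where
  "lap_moment_ratio p g x \<equiv> lap (\<lambda>t. t * p t) x / lap (\<lambda>t. t * g t) x"

definition H_lap :: "(real \<Rightarrow> real) \<Rightarrow> (real \<Rightarrow> real) \<Rightarrow> real \<Rightarrow> real" where
  "H_lap p g x = lap_moment_ratio p g x * lap g x - lap p x"

lemma H_lap_minus: "H_lap (\<lambda>t. - p t) g x = - H_lap p g x"
  unfolding H_lap_def by (simp add: lap_minus)

lemma H_lap_add:
  assumes "laplace_integrable p" "laplace_integrable q" "x > 0"
  shows "H_lap (\<lambda>t. p t + q t) g x = H_lap p g x + H_lap q g x"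
proof -
  have "lap (\<lambda>t. t * (p t + q t)) x = lap (\<lambda>t. t * p t + t * q t) x"
    by (simp add: distrib_left)
  also have "\<dots> = lap (\<lambda>t. t * p t) x + lap (\<lambda>t. t * q t) x"
    using assms by (intro lap_add laplace_integrable_mult_id)
  finally show ?thesis
    unfolding H_lap_def using lap_add[OF assms] by (simp add: add_divide_distrib algebra_simps)
qed

context
  fixes g :: "real \<Rightarrow> real"
  assumes g: "laplace_integrable g" and g_pos: "\<And>t. t > 0 \<Longrightarrow> g t > 0"
begin

lemma lap_g_pos: "x > 0 \<Longrightarrow> lap g x > 0"
  using lap_pos[OF g g_pos] .

lemma lap_mult_id_g_pos: "x > 0 \<Longrightarrow> lap (\<lambda>t. t * g t) x > 0"
  using lap_pos[OF laplace_integrable_mult_id[OF g]] g_pos by simp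

lemma H_fun_lap_eq_H_lap:
  assumes "laplace_integrable p" "x > 0"
  shows "H_fun (lap p) (lap g) x = H_lap p g x"
  unfolding H_fun_def H_lap_def
  using DERIV_imp_deriv[OF lap_has_real_derivative[OF assms]]
    DERIV_imp_deriv[OF lap_has_real_derivative[OF g assms(2)]]
  by simp

lemma lap_ratio_has_real_derivative:
  assumes p: "laplace_integrable p" and x: "x > 0"
  shows "((\<lambda>x. lap p x / lap g x) has_real_derivative
    - lap (\<lambda>t. t * g t) x * H_lap p g x / (lap g x)\<^sup>2) (at x)"
proof -
  have "((\<lambda>x. lap p x / lap g x) has_real_derivative
      (- lap (\<lambda>t. t * p t) x * lap g x - lap p x * - lap (\<lambda>t. t * g t) x) / (lap g x * lap g x)) (at x)"
    using lap_g_pos[OF x] by (intro DERIV_divide lap_has_real_derivative p g x) simp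
  moreover have "(- lap (\<lambda>t. t * p t) x * lap g x - lap p x * - lap (\<lambda>t. t * g t) x) / (lap g x * lap g x)
      = - lap (\<lambda>t. t * g t) x * H_lap p g x / (lap g x)\<^sup>2"
    unfolding H_lap_def using lap_g_pos[OF x] lap_mult_id_g_pos[OF x]
    by (simp add: field_simps power2_eq_square)
  ultimately show ?thesis by simp
qed

lemma lap_ratio_antimono_if_H_lap_nonneg:
  assumes p: "laplace_integrable p" and H: "\<And>x. x > 0 \<Longrightarrow> H_lap p g x \<ge> 0"
  shows "antimono_on {0<..} (\<lambda>x. lap p x / lap g x)"
proof (rule monotone_onI)
  fix x y :: real assume xy: "x \<in> {0<..}" "y \<in> {0<..}" "x \<le> y"
  show "lap p y / lap g y \<le> lap p x / lap g x"
  proof (rule DERIV_nonpos_imp_nonincreasing[OF xy(3)])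
    fix z assume "x \<le> z" "z \<le> y"
    then have z: "z > 0" using xy by simp
    have "- lap (\<lambda>t. t * g t) z * H_lap p g z / (lap g z)\<^sup>2 \<le> 0"
      using H[OF z] lap_mult_id_g_pos[OF z] by (simp add: mult_nonneg_nonneg)
    with lap_ratio_has_real_derivative[OF p z]
    show "\<exists>D. ((\<lambda>x. lap p x / lap g x) has_real_derivative D) (at z) \<and> D \<le> 0" by blast
  qed
qed

lemma H_lap_nonneg_if_ratio_mono:
  assumes p: "laplace_integrable p" and r: "mono_on {0<..} (\<lambda>t. p t / g t)" and x: "x > 0"
  shows "H_lap p g x \<ge> 0"
proof -
  define c where "c = lap p x / lap g x"
  define k where "k t = p t - c * g t" for t
  have k: "laplace_integrable k" unfolding k_def by (intro laplace_integrable_diff laplace_integrable_cmult p g)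
  have "lap k x = lap p x - c * lap g x"
    unfolding k_def using lap_diff[OF p laplace_integrable_cmult[OF g] x] by (simp add: lap_cmult)
  then have lap_k: "lap k x = 0" unfolding c_def using lap_g_pos[OF x] by simp
  have "lap (\<lambda>t. t * k t) x = lap (\<lambda>t. t * p t - c * (t * g t)) x"
    unfolding k_def by (simp add: algebra_simps)
  also have "\<dots> = lap (\<lambda>t. t * p t) x - c * lap (\<lambda>t. t * g t) x"
    using lap_diff[OF laplace_integrable_mult_id[OF p] laplace_integrable_cmult[OF laplace_integrable_mult_id[OF g]] x]
    by (simp add: lap_cmult)
  finally have "H_lap p g x = lap g x / lap (\<lambda>t. t * g t) x * lap (\<lambda>t. t * k t) x"
    unfolding H_lap_def c_def using lap_g_pos[OF x] lap_mult_id_g_pos[OF x] by (simp add: field_simps)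
  moreover have k_sign: "k t = g t * (p t / g t - c)" if "t > 0" for t
    unfolding k_def using g_pos[OF that] by (simp add: field_simps)
  have "{0<..} \<subseteq> {0::real..}" by auto
  from mono_on_level_crossing[OF r this, of c]
  have "lap (\<lambda>t. t * k t) x \<ge> 0"
  proof (elim disjE exE conjE)
    assume "\<forall>t\<in>{0<..}. p t / g t < c"
    then have "lap (\<lambda>t. - k t) x > 0"
      using k_sign g_pos by (intro lap_pos[OF laplace_integrable_minus[OF k] _ x]) (simp add: mult_pos_neg)
    then show ?thesis using lap_k by (simp add: lap_minus)
  next
    fix a assume below: "\<forall>t\<in>{0<..}. t < a \<longrightarrow> p t / g t \<le> c"
      and above: "\<forall>t\<in>{0<..}. a < t \<longrightarrow> c \<le> p t / g t"
    show ?thesis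
    proof (rule lap_mult_id_nonneg_if_sign_change[OF k x lap_k])
      show "k t \<le> 0" if "0 < t" "t < a" for t
        using below that k_sign[of t] g_pos[of t] by (simp add: mult_nonneg_nonpos)
      show "k t \<ge> 0" if "0 < t" "a < t" for t
        using above that k_sign[of t] g_pos[of t] by simp
    qed
  qed
  ultimately show ?thesis using lap_g_pos[OF x] lap_mult_id_g_pos[OF x] by simp
qed

lemma lap_moment_ratio_no_strict_valley:
  assumes p: "laplace_integrable p" and s: "0 \<le> s"
    and r1: "mono_on {0<..<s} (\<lambda>t. p t / g t)" and r2: "antimono_on {s<..} (\<lambda>t. p t / g t)"
    and x: "0 < x1" "x1 < x2" "x2 < x3"
  shows "\<not> (lap_moment_ratio p g x2 < lap_moment_ratio p g x1 \<and>
    lap_moment_ratio p g x2 < lap_moment_ratio p g x3)"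
proof
  assume valley: "lap_moment_ratio p g x2 < lap_moment_ratio p g x1 \<and>
    lap_moment_ratio p g x2 < lap_moment_ratio p g x3"
  define c where "c = lap_moment_ratio p g x2"
  define k where "k t = t * p t - c * (t * g t)" for t
  have k: "laplace_integrable k"
    unfolding k_def by (intro laplace_integrable_diff laplace_integrable_cmult laplace_integrable_mult_id p g)
  have lap_k: "lap k y = lap (\<lambda>t. t * g t) y * (lap_moment_ratio p g y - c)" if "y > 0" for y
  proof -
    have "lap k y = lap (\<lambda>t. t * p t) y - c * lap (\<lambda>t. t * g t) y"
      using lap_diff[OF laplace_integrable_mult_id[OF p] laplace_integrable_cmult[OF laplace_integrable_mult_id[OF g]] that]
      unfolding k_def by (simp add: lap_cmult)
    moreover have "lap (\<lambda>t. t * g t) y \<noteq> 0" using lap_mult_id_g_pos[OF that] by simp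
    ultimately show ?thesis by (simp add: right_diff_distrib mult.commute)
  qed
  have signs: "lap k x1 > 0" "lap k x2 = 0" "lap k x3 > 0"
    using valley x lap_k[of x1] lap_k[of x2] lap_k[of x3] lap_mult_id_g_pos[of x1] lap_mult_id_g_pos[of x3]
    unfolding c_def by auto
  obtain \<alpha> \<beta> where \<alpha>\<beta>: "\<alpha> \<ge> 0" "\<beta> \<ge> 0" "\<alpha> > 0 \<or> \<beta> > 0"
    and opposite: "\<And>t. t > 0 \<Longrightarrow> t \<noteq> s \<Longrightarrow>
      (p t / g t - c) * (\<alpha> * exp (- t * x1) - exp (- t * x2) + \<beta> * exp (- t * x3)) \<le> 0"
    using unimodal_exp_combination_opposite_sign[OF s r1 r2 x(2,3)] by metis
  have "k t * (\<alpha> * exp (- t * x1) - exp (- t * x2) + \<beta> * exp (- t * x3)) \<le> 0"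
    if "t > 0" "t \<noteq> s" for t
  proof -
    have "k t * (\<alpha> * exp (- t * x1) - exp (- t * x2) + \<beta> * exp (- t * x3))
        = (t * g t) * ((p t / g t - c) * (\<alpha> * exp (- t * x1) - exp (- t * x2) + \<beta> * exp (- t * x3)))"
      unfolding k_def using g_pos[of t] that by (simp add: field_simps)
    also have "\<dots> \<le> 0" using that g_pos[of t] by (intro mult_nonneg_nonpos opposite) auto
    finally show ?thesis .
  qed
  then have "\<alpha> * lap k x1 - lap k x2 + \<beta> * lap k x3 \<le> 0"
    using x by (intro lap_exp_combination_nonpos[OF k]) auto
  moreover have "\<alpha> * lap k x1 - lap k x2 + \<beta> * lap k x3 > 0"
    using signs \<alpha>\<beta> by (auto intro: add_pos_nonneg add_nonneg_pos)
  ultimately show False by simp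
qed

lemma H_lap_no_strict_valley:
  assumes p: "laplace_integrable p" and s: "0 \<le> s"
    and r1: "mono_on {0<..<s} (\<lambda>t. p t / g t)" and r2: "antimono_on {s<..} (\<lambda>t. p t / g t)"
    and x: "0 < x1" "x1 < x2" "x2 < x3"
  shows "\<not> (H_lap p g x2 < H_lap p g x1 \<and> H_lap p g x2 < H_lap p g x3)"
proof
  assume valley: "H_lap p g x2 < H_lap p g x1 \<and> H_lap p g x2 < H_lap p g x3"
  define q' where "q' z = (- lap (\<lambda>t. t * (t * p t)) z * lap (\<lambda>t. t * g t) z
      - lap (\<lambda>t. t * p t) z * - lap (\<lambda>t. t * (t * g t)) z) / (lap (\<lambda>t. t * g t) z * lap (\<lambda>t. t * g t) z)"
    for z
  have q': "((\<lambda>x. lap_moment_ratio p g x) has_real_derivative q' z) (at z)" if z: "z > 0" for z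
    unfolding q'_def using lap_mult_id_g_pos[OF z]
    by (intro DERIV_divide lap_has_real_derivative[OF laplace_integrable_mult_id[OF p] z]
        lap_has_real_derivative[OF laplace_integrable_mult_id[OF g] z]) simp
  \<comment> \<open>the terms without \<open>q'\<close> cancel: \<open>H' = q' L_g + q L_g' - L_p' = q' L_g\<close>\<close>
  have H': "(H_lap p g has_real_derivative lap g z * q' z) (at z)" if z: "z > 0" for z
  proof -
    have "q' z * lap g z + - lap (\<lambda>t. t * g t) z * lap_moment_ratio p g z - - lap (\<lambda>t. t * p t) z
        = lap g z * q' z"
      using lap_mult_id_g_pos[OF z] by simp
    then show ?thesis
      using DERIV_diff[OF DERIV_mult[OF q'[OF z] lap_has_real_derivative[OF g z]] lap_has_real_derivative[OF p z]]
      unfolding H_lap_def[abs_def] by (simp add: mult.commute)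
  qed
  have "(H_lap p g has_real_derivative lap g y * q' y) (at y)" if "x1 \<le> y" "y \<le> x3" for y
    using H' that x by simp
  then obtain z1 z3 where z: "x1 < z1" "z1 < z3" "z3 < x3" and "lap g z1 * q' z1 < 0" "lap g z3 * q' z3 > 0"
    using strict_valley_imp_derivative_signs[OF x(2,3) valley[THEN conjunct1] valley[THEN conjunct2],
        where g' = "\<lambda>y. lap g y * q' y"] by blast
  then have "q' z1 < 0" "q' z3 > 0"
    using lap_g_pos[of z1] lap_g_pos[of z3] x by (auto simp: mult_less_0_iff zero_less_mult_iff)
  then obtain u where "z1 < u" "u < z3"
    "lap_moment_ratio p g u < lap_moment_ratio p g z1" "lap_moment_ratio p g u < lap_moment_ratio p g z3"
    using derivative_signs_imp_strict_valley[OF z(2), of q' "\<lambda>x. lap_moment_ratio p g x"] q' x z by force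
  then show False
    using lap_moment_ratio_no_strict_valley[OF p s r1 r2, of z1 u z3] x z by linarith
qed

lemma H_lap_bound_if_vanishing_near_zero:
  assumes q: "laplace_integrable q" and \<delta>: "\<delta> > 0" and vanish: "\<And>t. 0 < t \<Longrightarrow> t < \<delta> \<Longrightarrow> q t = 0"
  obtains C where "\<And>x. x \<ge> 1 \<Longrightarrow> \<bar>H_lap q g x\<bar> \<le> exp (- (\<delta>/2) * (x - 1)) * C"
proof -
  define E where "E x = exp (- (\<delta>/2) * (x - 1))" for x
  define K where "K = lap (\<lambda>t. indicator {..<\<delta>/2} t * (t * g t)) 1"
  define A1 where "A1 = lap (\<lambda>t. \<bar>q t\<bar>) 1"
  define A2 where "A2 = lap (\<lambda>t. \<bar>t * q t\<bar>) 1"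
  define L where "L = lap g 1"
  have K: "K > 0" unfolding K_def
    using \<delta> g_pos by (intro lap_pos_if_pos_near_zero[where b = "\<delta>/2"] laplace_integrable_mult_indicator
        laplace_integrable_mult_id g) (auto simp: indicator_def less_imp_le)
  have A: "A1 \<ge> 0" "A2 \<ge> 0" unfolding A1_def A2_def by (auto intro: lap_nonneg)
  have "L \<ge> 0" using lap_g_pos[of 1] unfolding L_def by simp
  have "\<bar>H_lap q g x\<bar> \<le> E x * (L * A2 / K + A1)" if x: "x \<ge> 1" for x
  proof -
    have E: "0 < E x" "E x \<le> 1" unfolding E_def using x \<delta> by auto
    have EE: "exp (- \<delta> * (x - 1)) = E x * E x" unfolding E_def by (simp flip: exp_add)
    have L_q: "\<bar>lap q x\<bar> \<le> E x * E x * A1"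
      using lap_tail_bound[where \<delta> = \<delta> and y = 1 and x = x, OF q vanish] x unfolding EE A1_def by simp
    have M_q: "\<bar>lap (\<lambda>t. t * q t) x\<bar> \<le> E x * E x * A2"
      using lap_tail_bound[where \<delta> = \<delta> and y = 1 and x = x, OF laplace_integrable_mult_id[OF q]] vanish x
      unfolding EE A2_def by simp
    have M_g: "E x * K \<le> lap (\<lambda>t. t * g t) x"
      using lap_head_lower_bound[where \<delta> = "\<delta>/2" and y = 1 and x = x, OF laplace_integrable_mult_id[OF g]] g_pos x
      unfolding E_def K_def by (simp add: less_imp_le)
    have L_g: "0 < lap g x" "lap g x \<le> L"
      using lap_g_pos[of x] lap_antimono[OF g, of 1 x] g_pos x unfolding L_def by (auto simp: less_imp_le)
    have "\<bar>lap_moment_ratio q g x * lap g x\<bar> = \<bar>lap (\<lambda>t. t * q t) x\<bar> / lap (\<lambda>t. t * g t) x * lap g x"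
      using L_g lap_mult_id_g_pos[of x] x by (simp add: abs_mult)
    also have "\<dots> \<le> E x * E x * A2 / (E x * K) * L"
      using L_g M_q M_g E K A \<open>L \<ge> 0\<close> by (intro mult_mono frac_le) auto
    also have "\<dots> = E x * (L * A2 / K)" using E K by (simp add: field_simps)
    finally have "\<bar>lap_moment_ratio q g x * lap g x\<bar> \<le> E x * (L * A2 / K)" .
    moreover have "E x * E x * A1 \<le> E x * A1" using E A by (simp add: mult_left_le_one_le)
    moreover have "\<bar>H_lap q g x\<bar> \<le> \<bar>lap_moment_ratio q g x * lap g x\<bar> + \<bar>lap q x\<bar>"
      unfolding H_lap_def by (rule abs_triangle_ineq4)
    ultimately show ?thesis using L_q unfolding distrib_left by linarith
  qed
  then show thesis unfolding E_def by (rule that)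
qed

lemma H_lap_tendsto_zero_if_vanishing_near_zero:
  assumes q: "laplace_integrable q" and \<delta>: "\<delta> > 0" and vanish: "\<And>t. 0 < t \<Longrightarrow> t < \<delta> \<Longrightarrow> q t = 0"
  shows "(H_lap q g \<longlongrightarrow> 0) at_top"
proof -
  obtain C where bound: "\<And>x. x \<ge> 1 \<Longrightarrow> \<bar>H_lap q g x\<bar> \<le> exp (- (\<delta>/2) * (x - 1)) * C"
    using H_lap_bound_if_vanishing_near_zero[OF q \<delta> vanish] by blast
  have "filterlim (\<lambda>x. - 1 + x) at_top (at_top :: real filter)"
    by (rule filterlim_tendsto_add_at_top[OF tendsto_const filterlim_ident])
  then have "filterlim (\<lambda>x. - (\<delta>/2) * (x - 1)) at_bot at_top"
    using \<delta> by (intro filterlim_tendsto_neg_mult_at_bot[OF tendsto_const]) auto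
  then have "((\<lambda>x. exp (- (\<delta>/2) * (x - 1)) * C) \<longlongrightarrow> 0) at_top"
    by (intro tendsto_mult_left_zero filterlim_compose[OF exp_at_bot])
  moreover have "\<forall>\<^sub>F x in at_top. norm (H_lap q g x) \<le> exp (- (\<delta>/2) * (x - 1)) * C"
    using eventually_ge_at_top[of "1::real"] unfolding real_norm_def by (rule eventually_mono) (rule bound)
  ultimately show ?thesis by (rule Lim_null_comparison[rotated])
qed

lemma H_lap_eventually_gt_at_top:
  assumes p: "laplace_integrable p" and s: "s > 0" and r: "mono_on {0<..<s} (\<lambda>t. p t / g t)"
    and m: "m < 0"
  shows "\<forall>\<^sub>F x in at_top. m < H_lap p g x"
proof -
  define \<delta> where "\<delta> = s / 2"
  have \<delta>: "0 < \<delta>" "\<delta> < s" using s unfolding \<delta>_def by auto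
  define c where "c = p \<delta> / g \<delta>"
  \<comment> \<open>freezing the ratio at its value at \<open>\<delta>\<close> splits \<open>p\<close> into a part with increasing ratio
    and a part vanishing near \<open>0\<close>\<close>
  define head where "head t = indicator {..<\<delta>} t * p t + indicator {\<delta>..} t * (c * g t)" for t
  define tail where "tail t = indicator {\<delta>..} t * (p t - c * g t)" for t
  have head: "laplace_integrable head" unfolding head_def
    by (intro laplace_integrable_add laplace_integrable_mult_indicator laplace_integrable_cmult p g) auto
  have tail: "laplace_integrable tail" unfolding tail_def
    by (intro laplace_integrable_mult_indicator laplace_integrable_diff laplace_integrable_cmult p g) auto
  have "mono_on {0<..} (\<lambda>t. head t / g t)"
  proof (rule mono_onI)
    fix t t' :: real assume tt': "t \<in> {0<..}" "t' \<in> {0<..}" "t \<le> t'"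
    have ratio: "head u / g u = (if u < \<delta> then p u / g u else c)" if "u > 0" for u
      unfolding head_def using g_pos[OF that] by (simp add: indicator_def)
    show "head t / g t \<le> head t' / g t'"
      unfolding ratio[OF tt'(1)[simplified]] ratio[OF tt'(2)[simplified]] c_def
      using tt' \<delta> mono_onD[OF r, of t t'] mono_onD[OF r, of t \<delta>] by auto
  qed
  then have head_nonneg: "H_lap head g x \<ge> 0" if "x > 0" for x
    using H_lap_nonneg_if_ratio_mono[OF head _ that] by blast
  have "p = (\<lambda>t. head t + tail t)" unfolding head_def tail_def by (auto simp: indicator_def)
  then have split: "H_lap p g x = H_lap head g x + H_lap tail g x" if "x > 0" for x
    using H_lap_add[OF head tail that] by simp
  have "(H_lap tail g \<longlongrightarrow> 0) at_top"
    using \<delta> by (intro H_lap_tendsto_zero_if_vanishing_near_zero[OF tail]) (auto simp: tail_def)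
  then have "\<forall>\<^sub>F x in at_top. m < H_lap tail g x" using m by (intro order_tendstoD(1))
  with eventually_gt_at_top[of 0] show ?thesis
  proof eventually_elim
    case (elim x)
    then show ?case using head_nonneg[of x] split[of x] by simp
  qed
qed

lemma H_lap_nonneg_if_ratio_unimodal:
  assumes p: "laplace_integrable p" and s: "s > 0"
    and r1: "mono_on {0<..<s} (\<lambda>t. p t / g t)" and r2: "antimono_on {s<..} (\<lambda>t. p t / g t)"
    and near_zero: "\<And>m. m < 0 \<Longrightarrow> \<forall>\<^sub>F x in at_right 0. m < H_lap p g x"
    and x: "x > 0"
  shows "H_lap p g x \<ge> 0"
proof (rule ccontr)
  assume "\<not> H_lap p g x \<ge> 0"
  then have neg: "H_lap p g x < 0" by simp
  have "\<forall>\<^sub>F y in at_right 0. 0 < y \<and> y < x"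
    using x by (auto simp: eventually_at_right_field intro!: exI[of _ x])
  then have "\<forall>\<^sub>F y in at_right 0. (0 < y \<and> y < x) \<and> H_lap p g x < H_lap p g y"
    using near_zero[OF neg] by (rule eventually_conj)
  then obtain x1 where x1: "0 < x1" "x1 < x" "H_lap p g x < H_lap p g x1"
    using eventually_happens[of _ "at_right (0::real)"] by auto
  have "\<forall>\<^sub>F y in at_top. x < y \<and> H_lap p g x < H_lap p g y"
    using eventually_gt_at_top[of x] H_lap_eventually_gt_at_top[OF p s r1 neg] by (rule eventually_conj)
  then obtain x3 where x3: "x < x3" "H_lap p g x < H_lap p g x3"
    using eventually_happens[of _ "at_top :: real filter"] by auto
  show False
    using H_lap_no_strict_valley[OF p _ r1 r2 x1(1,2) x3(1)] s x1(3) x3(2) by simp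
qed

lemma H_lap_eventually_gt_if_H_fun_tendsto_nonneg:
  assumes p: "laplace_integrable p" and lim: "((\<lambda>x. ereal (H_fun (lap p) (lap g) x)) \<longlongrightarrow> l) (at_right 0)"
    and "0 \<le> l" "m < 0"
  shows "\<forall>\<^sub>F x in at_right 0. m < H_lap p g x"
proof -
  have "ereal m < 0" using \<open>m < 0\<close> by simp
  then have "ereal m < l" using \<open>0 \<le> l\<close> by (rule less_le_trans)
  then have "\<forall>\<^sub>F x in at_right 0. ereal m < ereal (H_fun (lap p) (lap g) x)"
    by (rule order_tendstoD(1)[OF lim])
  with eventually_at_right_less[of 0] show ?thesis
    by eventually_elim (simp add: H_fun_lap_eq_H_lap[OF p])
qed

lemma H_lap_eventually_less_if_H_fun_tendsto_nonpos:
  assumes p: "laplace_integrable p" and lim: "((\<lambda>x. ereal (H_fun (lap p) (lap g) x)) \<longlongrightarrow> l) (at_right 0)"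
    and "l \<le> 0" "m > 0"
  shows "\<forall>\<^sub>F x in at_right 0. H_lap p g x < m"
proof -
  have "0 < ereal m" using \<open>m > 0\<close> by simp
  with \<open>l \<le> 0\<close> have "l < ereal m" by (rule le_less_trans)
  then have "\<forall>\<^sub>F x in at_right 0. ereal (H_fun (lap p) (lap g) x) < ereal m"
    by (rule order_tendstoD(2)[OF lim])
  with eventually_at_right_less[of 0] show ?thesis
    by eventually_elim (simp add: H_fun_lap_eq_H_lap[OF p])
qed

lemma lap_ratio_antimono_if_ratio_mono_or_unimodal:
  assumes p: "laplace_integrable p"
    and ratio: "mono_on {0<..} (\<lambda>t. p t / g t) \<or>
      (\<exists>s>0. mono_on {0<..<s} (\<lambda>t. p t / g t) \<and> antimono_on {s<..} (\<lambda>t. p t / g t) \<and>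
        (\<exists>l::ereal. ((\<lambda>x. ereal (H_fun (lap p) (lap g) x)) \<longlongrightarrow> l) (at_right 0) \<and> l \<ge> 0))"
  shows "antimono_on {0<..} (\<lambda>x. lap p x / lap g x)"
  using ratio
proof (elim disjE exE conjE)
  assume "mono_on {0<..} (\<lambda>t. p t / g t)"
  then show ?thesis
    by (intro lap_ratio_antimono_if_H_lap_nonneg[OF p] H_lap_nonneg_if_ratio_mono[OF p])
next
  fix s l assume "s > 0" "mono_on {0<..<s} (\<lambda>t. p t / g t)" "antimono_on {s<..} (\<lambda>t. p t / g t)"
    "((\<lambda>x. ereal (H_fun (lap p) (lap g) x)) \<longlongrightarrow> l) (at_right 0)" "l \<ge> 0"
  then show ?thesis
    by (intro lap_ratio_antimono_if_H_lap_nonneg[OF p] H_lap_nonneg_if_ratio_unimodal[OF p]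
        H_lap_eventually_gt_if_H_fun_tendsto_nonneg[OF p])
qed

lemma lap_ratio_mono_if_ratio_antimono_or_unimodal:
  assumes p: "laplace_integrable p"
    and ratio: "antimono_on {0<..} (\<lambda>t. p t / g t) \<or>
      (\<exists>s>0. antimono_on {0<..<s} (\<lambda>t. p t / g t) \<and> mono_on {s<..} (\<lambda>t. p t / g t) \<and>
        (\<exists>l::ereal. ((\<lambda>x. ereal (H_fun (lap p) (lap g) x)) \<longlongrightarrow> l) (at_right 0) \<and> l \<le> 0))"
  shows "mono_on {0<..} (\<lambda>x. lap p x / lap g x)"
proof -
  have flip: "mono_on S (\<lambda>t. - p t / g t) \<longleftrightarrow> antimono_on S (\<lambda>t. p t / g t)"
    "antimono_on S (\<lambda>t. - p t / g t) \<longleftrightarrow> mono_on S (\<lambda>t. p t / g t)" for S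
    by (auto simp: monotone_on_def)
  have minus_p: "laplace_integrable (\<lambda>t. - p t)" using laplace_integrable_minus[OF p] .
  have "H_lap (\<lambda>t. - p t) g x \<ge> 0" if "x > 0" for x
    using ratio
  proof (elim disjE exE conjE)
    assume "antimono_on {0<..} (\<lambda>t. p t / g t)"
    then show ?thesis using H_lap_nonneg_if_ratio_mono[OF minus_p _ that] flip by blast
  next
    fix s l assume s: "s > 0" "antimono_on {0<..<s} (\<lambda>t. p t / g t)" "mono_on {s<..} (\<lambda>t. p t / g t)"
      and lim: "((\<lambda>x. ereal (H_fun (lap p) (lap g) x)) \<longlongrightarrow> l) (at_right 0)" "l \<le> 0"
    have "\<forall>\<^sub>F x in at_right 0. m < H_lap (\<lambda>t. - p t) g x" if "m < 0" for m
      using H_lap_eventually_less_if_H_fun_tendsto_nonpos[OF p lim, of "- m"] that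
      by (auto simp: H_lap_minus elim: eventually_mono)
    then show ?thesis
      using H_lap_nonneg_if_ratio_unimodal[OF minus_p s(1) _ _ _ \<open>x > 0\<close>] s flip by blast
  qed
  then have "antimono_on {0<..} (\<lambda>x. lap (\<lambda>t. - p t) x / lap g x)"
    by (rule lap_ratio_antimono_if_H_lap_nonneg[OF minus_p])
  then show ?thesis by (auto simp: monotone_on_def lap_minus)
qed

end

lemma antimono_on_inverse:
  fixes f :: "'a::order \<Rightarrow> 'b::linordered_field"
  assumes "mono_on S f" "\<And>x. x \<in> S \<Longrightarrow> 0 < f x"
  shows "antimono_on S (\<lambda>x. inverse (f x))"
  using assms by (auto simp: monotone_on_def intro!: le_imp_inverse_le)

theorem theorem4:
  fixes fX fY :: "real \<Rightarrow> real"
  assumes dX: "is_density fX" and dY: "is_density fY"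
    and posY: "\<forall>t>0. fY t > 0"
  shows "((mono_on {0<..} (\<lambda>t. fX t / fY t)
          \<or> (\<exists>ts>0. mono_on {0<..<ts} (\<lambda>t. fX t / fY t)
                   \<and> antimono_on {ts<..} (\<lambda>t. fX t / fY t)
                   \<and> (\<exists>l::ereal. ((\<lambda>x. ereal (H_fun (lap fX) (lap fY) x)) \<longlongrightarrow> l) (at_right 0)
                             \<and> l \<ge> 0)))
         \<longrightarrow> lt_r_le fY fX)
       \<and> ((antimono_on {0<..} (\<lambda>t. fX t / fY t)
          \<or> (\<exists>ts>0. antimono_on {0<..<ts} (\<lambda>t. fX t / fY t)
                   \<and> mono_on {ts<..} (\<lambda>t. fX t / fY t)
                   \<and> (\<exists>l::ereal. ((\<lambda>x. ereal (H_fun (lap fX) (lap fY) x)) \<longlongrightarrow> l) (at_right 0)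
                             \<and> l \<le> 0)))
         \<longrightarrow> lt_r_le fX fY)"
proof -
  have fX: "set_integrable lborel {0<..} fX" "\<And>t. t > 0 \<Longrightarrow> 0 \<le> fX t" "(LBINT t:{0<..}. fX t) = 1"
    using dX unfolding is_density_def by auto
  then have X: "laplace_integrable fX" by (intro laplace_integrable_if_set_integrable)
  have Y: "laplace_integrable fY" "\<And>t. t > 0 \<Longrightarrow> fY t > 0"
    using dY posY unfolding is_density_def by (auto intro: laplace_integrable_if_set_integrable)
  have "lap fX x / lap fY x > 0" if "x > 0" for x
    using lap_pos_if_set_integral_nonzero[OF fX(1,2) _ that] fX(3) lap_g_pos[OF Y that] by simp
  then have "mono_on {0<..} (\<lambda>x. lap fX x / lap fY x) \<Longrightarrow> lt_r_le fX fY"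
    using antimono_on_inverse[of "{0<..}" "\<lambda>x. lap fX x / lap fY x"] unfolding lt_r_le_def by simp
  then show ?thesis
    using lap_ratio_antimono_if_ratio_mono_or_unimodal[OF Y X] lap_ratio_mono_if_ratio_antimono_or_unimodal[OF Y X]
    unfolding lt_r_le_def by blast
qed

end
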